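(* Let $n$ be a positive integer and $\varphi(z)=bz$ for some $b\in\mathbb D\setminus\{0\}$. Then the composition–differentiation operator $D_{\varphi,n}f=f^{(n)}\circ\varphi$ on the Hardy space $H^2$ satisfies $$\|D_{\varphi,n}\|_{-1}=n!\binom{N}{n}|b|^{N-n},\qquad N=\Big\lfloor\frac{n}{1-|b|}\Big\rfloor.$$
   Context: $H^2$ is the Hardy space of analytic $f$ on the open unit disk $\mathbb D$ with $\|f\|^2=\sup_{0<r<1}\frac1{2\pi}\int_0^{2\pi}|f(re^{i\theta})|^2d\theta<\infty$; $\|T\|_{-1}$ denotes the operator norm on $H^2$. $\lfloor\cdot\rfloor$ is the greatest integer function. *)

theory Defs
  imports "HOL-Analysis.Analysis"
begin

definition H2_mean :: "(complex \<Rightarrow> complex) \<Rightarrow> real \<Rightarrow> real" where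
  "H2_mean f r = (1 / (2 * pi)) * integral {0..2*pi} (\<lambda>\<theta>. (cmod (f (of_real r * cis \<theta>)))^2)"

definition in_H2 :: "(complex \<Rightarrow> complex) \<Rightarrow> bool" where
  "in_H2 f \<longleftrightarrow> f holomorphic_on ball 0 1 \<and> bdd_above (H2_mean f ` {0<..<1})"

definition H2_norm :: "(complex \<Rightarrow> complex) \<Rightarrow> real" where
  "H2_norm f = sqrt (SUP r\<in>{0<..<1}. H2_mean f r)"

definition H2_opnorm :: "((complex \<Rightarrow> complex) \<Rightarrow> (complex \<Rightarrow> complex)) \<Rightarrow> real" where
  "H2_opnorm T = (SUP f\<in>{f. in_H2 f \<and> H2_norm f \<le> 1}. H2_norm (T f))"

definition comp_diff :: "(complex \<Rightarrow> complex) \<Rightarrow> nat \<Rightarrow> (complex \<Rightarrow> complex) \<Rightarrow> (complex \<Rightarrow> complex)" where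
  "comp_diff \<phi> n f = (\<lambda>z. (deriv ^^ n) f (\<phi> z))"

end

(*
  Expanding f = \<Sum> a_k z^k, the H^2 norm of f is the l^2 norm of (a_k) (Parseval on the circles
  |z| = r, then r \<rightarrow> 1). The k-th Taylor coefficient of f^(n)(b z) is (k+n)!/k! a_(k+n) b^k, of
  modulus w_k |a_(k+n)| with w_k = (k+n)!/k! |b|^k, so the operator norm is sup_k w_k, attained at
  the monomial z^(k+n). Since w_(k+1)/w_k = (k+n+1)|b|/(k+1) is at least 1 exactly when
  k + n + 1 \<le> n/(1 - |b|), the weights increase up to k = N - n and decrease afterwards, and the
  supremum is w_(N-n) = N!/(N-n)! |b|^(N-n) = n! (N choose n) |b|^(N-n).
*)

theory Submission
  imports Defs "HOL-Complex_Analysis.Complex_Analysis"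
begin

lemma has_integral_cis_int:
  fixes m :: int
  shows "((\<lambda>\<theta>. cis (of_int m * \<theta>)) has_integral (if m = 0 then 2 * pi else 0)) {0..2*pi}"
proof (cases "m = 0")
  case False
  let ?F = "\<lambda>z. exp (\<i> * of_int m * z) / (\<i> * of_int m)"
  have "((\<lambda>\<theta>. cis (of_int m * \<theta>)) has_integral ?F (of_real (2 * pi)) - ?F (of_real 0)) {0..2*pi}"
  proof (rule fundamental_theorem_of_calculus)
    show "((\<lambda>\<theta>. ?F (of_real \<theta>)) has_vector_derivative cis (of_int m * x))
            (at x within {0..2*pi})" for x
      using False
      by (auto intro!: has_vector_derivative_real_field derivative_eq_intros
               simp: cis_conv_exp mult_ac)
  qed auto
  moreover have "?F (of_real (2 * pi)) = ?F (of_real 0)"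
    using exp_integer_2pi[of "of_int m"] by (simp add: mult_ac)
  ultimately show ?thesis using False by simp
qed (use has_integral_const_real[of "1::complex" 0 "2 * pi"] in \<open>simp add: scaleR_conv_of_real\<close>)

lemma has_integral_norm_trig_poly_square:
  fixes d :: "nat \<Rightarrow> complex"
  shows "((\<lambda>\<theta>. (cmod (\<Sum>k<m. d k * cis (real k * \<theta>)))^2) has_integral
          2 * pi * (\<Sum>k<m. (cmod (d k))^2)) {0..2*pi}"
proof -
  have expand: "complex_of_real ((cmod (\<Sum>k<m. d k * cis (real k * \<theta>)))^2) =
      (\<Sum>j<m. \<Sum>k<m. d j * cnj (d k) * cis (of_int (int j - int k) * \<theta>))" for \<theta>
    unfolding complex_norm_square cnj_sum sum_product
    by (intro sum.cong refl) (simp add: cis_cnj cis_mult left_diff_distrib right_diff_distrib mult_ac)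
  have "((\<lambda>\<theta>. \<Sum>j<m. \<Sum>k<m. d j * cnj (d k) * cis (of_int (int j - int k) * \<theta>)) has_integral
         (\<Sum>j<m. \<Sum>k<m. d j * cnj (d k) * (if j = k then 2 * pi else 0))) {0..2*pi}"
    using has_integral_cis_int[of "int _ - int _"]
    by (intro has_integral_sum has_integral_mult_right finite_lessThan) auto
  moreover have "(\<Sum>j<m. \<Sum>k<m. d j * cnj (d k) * (if j = k then 2 * pi else 0)) =
      complex_of_real (2 * pi * (\<Sum>k<m. (cmod (d k))^2))"
  proof -
    have "(\<Sum>k<m. d j * cnj (d k) * (if j = k then 2 * pi else 0)) = of_real (2 * pi * (cmod (d j))^2)"
      if "j < m" for j
    proof -
      have "(\<Sum>k<m. d j * cnj (d k) * (if j = k then 2 * pi else 0)) =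
            (\<Sum>k<m. if k = j then d j * cnj (d j) * (2 * pi) else 0)"
        by (intro sum.cong) auto
      with that show ?thesis by (simp add: complex_norm_square mult_ac del: of_real_power)
    qed
    then show ?thesis by (simp add: sum_distrib_left)
  qed
  ultimately have "((\<lambda>\<theta>. complex_of_real ((cmod (\<Sum>k<m. d k * cis (real k * \<theta>)))^2)) has_integral
      complex_of_real (2 * pi * (\<Sum>k<m. (cmod (d k))^2))) {0..2*pi}"
    by (simp only: expand)
  from has_integral_Re[OF this] show ?thesis by simp
qed

lemma sums_H2_mean_power_series:
  fixes c :: "nat \<Rightarrow> complex" and g :: "complex \<Rightarrow> complex"
  assumes g: "\<And>z. z \<in> ball 0 1 \<Longrightarrow> (\<lambda>k. c k * z^k) sums g z"
    and r: "0 \<le> r" "r < 1"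
  shows "(\<lambda>k. (cmod (c k))^2 * r^(2*k)) sums H2_mean g r"
proof -
  define F where "F m \<theta> = (cmod (\<Sum>k<m. c k * (of_real r * cis \<theta>)^k))^2" for m \<theta>
  define P where "P m = (\<Sum>k<m. (cmod (c k))^2 * r^(2*k))" for m
  have F_int: "(F m has_integral 2 * pi * P m) {0..2*pi}" for m
  proof -
    have monomial: "c k * (of_real r * cis \<theta>)^k = (c k * of_real (r^k)) * cis (real k * \<theta>)" for k \<theta>
      by (simp add: power_mult_distrib Complex.DeMoivre)
    have coeff: "(cmod (c k * of_real (r^k)))^2 = (cmod (c k))^2 * r^(2*k)" for k
      using r by (simp add: norm_mult norm_power power_mult_distrib power_mult mult.commute)
    show ?thesis
      using has_integral_norm_trig_poly_square[of "\<lambda>k. c k * of_real (r^k)" m]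
      unfolding F_def P_def monomial coeff .
  qed
  \<comment> \<open>the partial sums are dominated by the square of the absolutely convergent sum at radius r\<close>
  obtain \<rho> :: real where \<rho>: "r < \<rho>" "\<rho> < 1"
    using r dense by blast
  then have "summable (\<lambda>k. c k * of_real \<rho> ^ k)"
    using g[of "of_real \<rho>"] r by (auto intro: sums_summable)
  then have abs_summable: "summable (\<lambda>k. norm (c k * of_real r ^ k))"
    by (rule powser_insidea) (use r \<rho> in auto)
  have F_bound: "norm (F m \<theta>) \<le> (\<Sum>k. norm (c k * of_real r ^ k))^2" for m \<theta>
  proof -
    have "cmod (\<Sum>k<m. c k * (of_real r * cis \<theta>)^k) \<le> (\<Sum>k<m. norm (c k * of_real r ^ k))"
      by (rule order_trans[OF norm_sum]) (simp add: norm_mult norm_power)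
    also have "\<dots> \<le> (\<Sum>k. norm (c k * of_real r ^ k))"
      by (rule sum_le_suminf[OF abs_summable]) auto
    finally show ?thesis by (simp add: F_def power_mono)
  qed
  have F_lim: "(\<lambda>m. F m \<theta>) \<longlonglongrightarrow> (cmod (g (of_real r * cis \<theta>)))^2" for \<theta>
  proof -
    have "of_real r * cis \<theta> \<in> ball 0 1" using r by (simp add: norm_mult)
    then have "(\<lambda>m. \<Sum>k<m. c k * (of_real r * cis \<theta>)^k) \<longlonglongrightarrow> g (of_real r * cis \<theta>)"
      using g sums_def by blast
    then show ?thesis
      unfolding F_def by (intro tendsto_power tendsto_norm)
  qed
  have "(\<lambda>m. integral {0..2*pi} (F m)) \<longlonglongrightarrow> integral {0..2*pi} (\<lambda>\<theta>. (cmod (g (of_real r * cis \<theta>)))^2)"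
    by (rule dominated_convergence(2)) (use F_int F_bound F_lim in auto)
  then have "(\<lambda>m. 1 / (2 * pi) * integral {0..2*pi} (F m)) \<longlonglongrightarrow> H2_mean g r"
    unfolding H2_mean_def by (rule tendsto_mult_left)
  moreover have "1 / (2 * pi) * integral {0..2*pi} (F m) = P m" for m
    using integral_unique[OF F_int] by simp
  ultimately show ?thesis unfolding sums_def P_def by simp
qed

lemma sum_coeffs_square_le_H2_mean_bound:
  fixes c :: "nat \<Rightarrow> complex" and g :: "complex \<Rightarrow> complex"
  assumes g: "\<And>z. z \<in> ball 0 1 \<Longrightarrow> (\<lambda>k. c k * z^k) sums g z"
    and bound: "\<And>r. r \<in> {0<..<1} \<Longrightarrow> H2_mean g r \<le> M"
  shows "(\<Sum>k<m. (cmod (c k))^2) \<le> M"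
proof -
  have "(\<Sum>k<m. (cmod (c k))^2 * r^(2*k)) \<le> M" if "r \<in> {0<..<1}" for r
  proof -
    have mean: "(\<lambda>k. (cmod (c k))^2 * r^(2*k)) sums H2_mean g r"
      using sums_H2_mean_power_series[OF g] that by auto
    have "(\<Sum>k<m. (cmod (c k))^2 * r^(2*k)) \<le> H2_mean g r"
      using sum_le_suminf[OF sums_summable[OF mean]] sums_unique[OF mean] by auto
    then show ?thesis using bound[OF that] by linarith
  qed
  then have "eventually (\<lambda>r. (\<Sum>k<m. (cmod (c k))^2 * r^(2*k)) \<le> M) (at_left 1)"
    using eventually_at_left_real[of 0 "1::real"] by (auto elim: eventually_mono)
  moreover have "((\<lambda>r. \<Sum>k<m. (cmod (c k))^2 * r^(2*k)) \<longlongrightarrow> (\<Sum>k<m. (cmod (c k))^2)) (at_left (1::real))"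
    by (auto intro!: tendsto_eq_intros)
  ultimately show ?thesis
    by (intro tendsto_upperbound) auto
qed

lemma in_H2_iff_summable_coeffs:
  fixes c :: "nat \<Rightarrow> complex" and g :: "complex \<Rightarrow> complex"
  assumes g: "\<And>z. z \<in> ball 0 1 \<Longrightarrow> (\<lambda>k. c k * z^k) sums g z"
  shows "in_H2 g \<longleftrightarrow> summable (\<lambda>k. (cmod (c k))^2)"
proof
  assume "in_H2 g"
  then obtain M where M: "\<And>r. r \<in> {0<..<1} \<Longrightarrow> H2_mean g r \<le> M"
    unfolding in_H2_def bdd_above_def by fastforce
  show "summable (\<lambda>k. (cmod (c k))^2)"
  proof (rule bounded_imp_summable)
    show "(\<Sum>k\<le>m. (cmod (c k))^2) \<le> M" for m
      using sum_coeffs_square_le_H2_mean_bound[OF g M, of "Suc m"] by (simp add: lessThan_Suc_atMost)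
  qed simp
next
  assume summable: "summable (\<lambda>k. (cmod (c k))^2)"
  have "H2_mean g r \<le> (\<Sum>k. (cmod (c k))^2)" if "r \<in> {0<..<1}" for r
  proof -
    have mean: "(\<lambda>k. (cmod (c k))^2 * r^(2*k)) sums H2_mean g r"
      using sums_H2_mean_power_series[OF g] that by auto
    have "(cmod (c k))^2 * r^(2*k) \<le> (cmod (c k))^2" for k
      using that by (auto intro!: mult_left_le power_le_one)
    then show ?thesis
      using suminf_le[OF _ sums_summable[OF mean] summable] sums_unique[OF mean] by simp
  qed
  moreover have "g holomorphic_on ball 0 1"
    using power_series_holomorphic[of 0 1 c g] g by simp
  ultimately show "in_H2 g"
    unfolding in_H2_def by (auto intro!: bdd_aboveI2[where M = "\<Sum>k. (cmod (c k))^2"])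
qed

lemma H2_norm_power_series:
  fixes c :: "nat \<Rightarrow> complex" and g :: "complex \<Rightarrow> complex"
  assumes g: "\<And>z. z \<in> ball 0 1 \<Longrightarrow> (\<lambda>k. c k * z^k) sums g z"
    and "in_H2 g"
  shows "H2_norm g = sqrt (\<Sum>k. (cmod (c k))^2)"
proof -
  have summable: "summable (\<lambda>k. (cmod (c k))^2)"
    using in_H2_iff_summable_coeffs[OF g] \<open>in_H2 g\<close> by simp
  have "(SUP r\<in>{0<..<1}. H2_mean g r) = (\<Sum>k. (cmod (c k))^2)"
  proof (rule cSup_eq_non_empty)
    fix x assume "x \<in> H2_mean g ` {0<..<1}"
    then obtain r where r: "r \<in> {0<..<1}" and x: "x = H2_mean g r" by auto
    have mean: "(\<lambda>k. (cmod (c k))^2 * r^(2*k)) sums H2_mean g r"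
      using sums_H2_mean_power_series[OF g] r by auto
    have "(cmod (c k))^2 * r^(2*k) \<le> (cmod (c k))^2" for k
      using r by (auto intro!: mult_left_le power_le_one)
    then show "x \<le> (\<Sum>k. (cmod (c k))^2)"
      using suminf_le[OF _ sums_summable[OF mean] summable] sums_unique[OF mean] x by simp
  next
    fix M assume "\<And>x. x \<in> H2_mean g ` {0<..<1} \<Longrightarrow> x \<le> M"
    then show "(\<Sum>k. (cmod (c k))^2) \<le> M"
      by (intro suminf_le_const[OF summable] sum_coeffs_square_le_H2_mean_bound[OF g]) auto
  qed auto
  then show ?thesis unfolding H2_norm_def by simp
qed

lemma H2_monomial:
  fixes a :: complex
  shows "in_H2 (\<lambda>z. a * z ^ m)" and "H2_norm (\<lambda>z. a * z ^ m) = cmod a"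
proof -
  have series: "(\<lambda>k. (if k = m then a else 0) * z ^ k) sums (a * z ^ m)" for z :: complex
    using sums_single[of m "\<lambda>k. a * z ^ k"] by (simp add: if_distrib[of "\<lambda>x. x * _"] cong: if_cong)
  have coeffs: "(\<lambda>k. (cmod (if k = m then a else 0))^2) = (\<lambda>k. if k = m then (cmod a)^2 else 0)"
    by auto
  show H2: "in_H2 (\<lambda>z. a * z ^ m)"
    using in_H2_iff_summable_coeffs[OF series] coeffs by simp
  show "H2_norm (\<lambda>z. a * z ^ m) = cmod a"
    using H2_norm_power_series[OF series H2] coeffs sums_unique[OF sums_single[of m "\<lambda>_. (cmod a)^2"]]
    by simp
qed

lemma comp_diff_dilation_sums:
  fixes f :: "complex \<Rightarrow> complex" and b z :: complex
  assumes f: "f holomorphic_on ball 0 1" and b: "cmod b \<le> 1" and z: "z \<in> ball 0 1"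
  shows "(\<lambda>k. (deriv ^^ (k + n)) f 0 / fact k * b ^ k * z ^ k) sums comp_diff (\<lambda>z. b * z) n f z"
proof -
  have "(deriv ^^ n) f holomorphic_on ball 0 1"
    using holomorphic_higher_deriv[OF f] by simp
  moreover have "b * z \<in> ball 0 1"
    using b z mult_right_mono[OF b, of "cmod z"] by (simp add: norm_mult)
  ultimately have "(\<lambda>k. (deriv ^^ k) ((deriv ^^ n) f) 0 / fact k * (b * z - 0) ^ k) sums (deriv ^^ n) f (b * z)"
    by (rule holomorphic_power_series)
  then show ?thesis
    by (simp add: comp_diff_def funpow_add power_mult_distrib mult_ac)
qed

lemma comp_diff_dilation_bounded:
  fixes f :: "complex \<Rightarrow> complex" and b :: complex and W :: real
  assumes b: "cmod b \<le> 1"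
    and weight: "\<And>k. fact (k + n) / fact k * cmod b ^ k \<le> W"
    and f: "in_H2 f"
  shows "in_H2 (comp_diff (\<lambda>z. b * z) n f)"
    and "H2_norm (comp_diff (\<lambda>z. b * z) n f) \<le> W * H2_norm f"
proof -
  define a where "a k = (deriv ^^ k) f 0 / fact k" for k
  define c where "c k = (deriv ^^ (k + n)) f 0 / fact k * b ^ k" for k
  have f_hol: "f holomorphic_on ball 0 1"
    using f unfolding in_H2_def by simp
  have f_series: "(\<lambda>k. a k * z ^ k) sums f z" if "z \<in> ball 0 1" for z
    using holomorphic_power_series[OF f_hol that] by (simp add: a_def)
  have D_series: "(\<lambda>k. c k * z ^ k) sums comp_diff (\<lambda>z. b * z) n f z" if "z \<in> ball 0 1" for z
    using comp_diff_dilation_sums[OF f_hol b that] by (simp add: c_def)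
  have a_summable: "summable (\<lambda>k. (cmod (a k))^2)"
    using in_H2_iff_summable_coeffs[OF f_series] f by simp
  then have a_shift_summable: "summable (\<lambda>k. (cmod (a (k + n)))^2)"
    by (rule summable_ignore_initial_segment)
  have "0 \<le> W"
    using weight[of 0] by (simp add: order.trans[OF fact_ge_zero])
  have c_le: "(cmod (c k))^2 \<le> W^2 * (cmod (a (k + n)))^2" for k
  proof -
    have "cmod (c k) = cmod (a (k + n)) * (fact (k + n) / fact k * cmod b ^ k)"
      by (simp add: a_def c_def norm_mult norm_divide norm_power)
    also have "\<dots> \<le> cmod (a (k + n)) * W"
      by (rule mult_left_mono[OF weight]) simp
    finally have "cmod (c k) \<le> W * cmod (a (k + n))"
      by (simp add: mult.commute)
    then show ?thesis
      by (metis norm_ge_zero power_mono power_mult_distrib)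
  qed
  have c_summable: "summable (\<lambda>k. (cmod (c k))^2)"
    by (rule summable_comparison_test'[OF summable_mult[OF a_shift_summable, of "W^2"]]) (use c_le in simp)
  then show D: "in_H2 (comp_diff (\<lambda>z. b * z) n f)"
    using in_H2_iff_summable_coeffs[OF D_series] by simp
  have "(\<Sum>k. (cmod (c k))^2) \<le> (\<Sum>k. W^2 * (cmod (a (k + n)))^2)"
    by (rule suminf_le[OF c_le c_summable summable_mult[OF a_shift_summable]])
  also have "\<dots> = W^2 * (\<Sum>k. (cmod (a (k + n)))^2)"
    by (rule suminf_mult[OF a_shift_summable])
  also have "\<dots> \<le> W^2 * (\<Sum>k. (cmod (a k))^2)"
    using suminf_split_initial_segment[OF a_summable, of n]
    by (intro mult_left_mono) (auto intro: sum_nonneg)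
  finally have "sqrt (\<Sum>k. (cmod (c k))^2) \<le> sqrt (W^2 * (\<Sum>k. (cmod (a k))^2))"
    by (rule real_sqrt_le_mono)
  then show "H2_norm (comp_diff (\<lambda>z. b * z) n f) \<le> W * H2_norm f"
    using \<open>0 \<le> W\<close> H2_norm_power_series[OF D_series D] H2_norm_power_series[OF f_series f]
    by (simp add: real_sqrt_mult)
qed

lemma fact_ratio_power_le_peak:
  fixes t :: real and n :: nat
  assumes t: "0 < t" "t < 1"
  defines "N \<equiv> nat \<lfloor>real n / (1 - t)\<rfloor>"
  shows "n \<le> N" and "fact (k + n) / fact k * t ^ k \<le> fact N / fact (N - n) * t ^ (N - n)"
proof -
  define w :: "nat \<Rightarrow> real" where "w k = fact (k + n) / fact k * t ^ k" for k
  have N_iff: "real m \<le> real n / (1 - t) \<longleftrightarrow> m \<le> N" for m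
    unfolding N_def using t by (simp add: le_nat_iff le_floor_iff)
  have "real n \<le> real n / (1 - t)"
    using t by (simp add: field_simps mult_left_le)
  then show "n \<le> N"
    using N_iff by blast
  define q :: "nat \<Rightarrow> real" where "q k = real (k + n + 1) * t / real (k + 1)" for k
  have w_Suc: "w (Suc k) = w k * q k" for k
    unfolding w_def q_def by (simp add: field_simps)
  have q_ge_1_iff: "1 \<le> q k \<longleftrightarrow> k + n + 1 \<le> N" for k
    unfolding q_def using t by (simp flip: N_iff add: field_simps)
  have w_nonneg: "0 \<le> w k" for k
    using t by (simp add: w_def)
  have up: "w k \<le> w (Suc k)" if "k \<in> {..<N - n}" for k
  proof -
    have "1 \<le> q k" using that q_ge_1_iff \<open>n \<le> N\<close> by simp
    then show ?thesis using mult_left_mono[OF _ w_nonneg, of 1 "q k" k] by (simp add: w_Suc)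
  qed
  have down: "w (Suc k) \<le> w k" if "k \<in> {N - n..}" for k
  proof -
    have "\<not> 1 \<le> q k" using that q_ge_1_iff \<open>n \<le> N\<close> by simp
    then have "q k \<le> 1" by simp
    then show ?thesis using mult_left_mono[OF _ w_nonneg, of "q k" 1 k] by (simp add: w_Suc)
  qed
  have "w k \<le> w (N - n)"
    by (cases "k \<le> N - n")
       (auto intro: lift_Suc_mono_le_ivl[of "{..<N - n}" w] lift_Suc_antimono_le_ivl[of "{N - n..}" w] up down)
  then show "fact (k + n) / fact k * t ^ k \<le> fact N / fact (N - n) * t ^ (N - n)"
    using \<open>n \<le> N\<close> by (simp add: w_def)
qed

lemma pochhammer_of_nat_Suc_diff:
  assumes "n \<le> N"
  shows "pochhammer (of_nat (Suc N - n)) n = (fact N / fact (N - n) :: 'a :: field_char_0)"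
proof -
  have "of_nat (Suc N - n) = (1 + of_nat (N - n) :: 'a)"
    using assms by (simp add: Suc_diff_le)
  moreover have "fact N = (pochhammer 1 ((N - n) + n) :: 'a)"
    using assms by (simp add: pochhammer_fact)
  ultimately have "fact N = fact (N - n) * (pochhammer (of_nat (Suc N - n)) n :: 'a)"
    by (simp only: pochhammer_product' pochhammer_fact)
  then show ?thesis by simp
qed

lemma comp_diff_dilation_power:
  fixes b :: complex
  assumes "n \<le> N"
  shows "comp_diff (\<lambda>z. b * z) n (\<lambda>z. z ^ N) = (\<lambda>z. of_real (fact N / fact (N - n)) * b ^ (N - n) * z ^ (N - n))"
  using higher_deriv_power[of n "0::complex" N] pochhammer_of_nat_Suc_diff[OF assms, where 'a = complex]
  by (simp add: comp_diff_def power_mult_distrib mult.assoc)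

lemma H2_opnorm_eqI:
  assumes bound: "\<And>f. in_H2 f \<Longrightarrow> H2_norm f \<le> 1 \<Longrightarrow> H2_norm (T f) \<le> W"
    and extremal: "in_H2 e" "H2_norm e \<le> 1" "H2_norm (T e) = W"
  shows "bdd_above ((\<lambda>f. H2_norm (T f)) ` {f. in_H2 f \<and> H2_norm f \<le> 1})"
    and "H2_opnorm T = W"
proof -
  show "bdd_above ((\<lambda>f. H2_norm (T f)) ` {f. in_H2 f \<and> H2_norm f \<le> 1})"
    using bound by (auto intro!: bdd_aboveI2)
  have "W \<in> (\<lambda>f. H2_norm (T f)) ` {f. in_H2 f \<and> H2_norm f \<le> 1}"
    using extremal by force
  then show "H2_opnorm T = W"
    unfolding H2_opnorm_def by (rule cSup_eq_maximum) (use bound in auto)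
qed

theorem theorem3p3:
  fixes n :: nat and b :: complex
  assumes "n \<ge> 1" and "b \<in> ball 0 1" and "b \<noteq> 0"
  defines "N \<equiv> nat \<lfloor>real n / (1 - cmod b)\<rfloor>"
  shows "(\<forall>f. in_H2 f \<longrightarrow> in_H2 (comp_diff (\<lambda>z. b * z) n f))
    \<and> bdd_above ((\<lambda>f. H2_norm (comp_diff (\<lambda>z. b * z) n f)) ` {f. in_H2 f \<and> H2_norm f \<le> 1})
    \<and> H2_opnorm (comp_diff (\<lambda>z. b * z) n) = fact n * real (N choose n) * cmod b ^ (N - n)"
proof -
  let ?D = "comp_diff (\<lambda>z. b * z) n"
  define W where "W = fact N / fact (N - n) * cmod b ^ (N - n)"
  have b: "0 < cmod b" "cmod b < 1"
    using assms(2,3) by auto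
  note peak = fact_ratio_power_le_peak[OF b, where n = n, folded N_def]
  have D_bounded: "in_H2 (?D f)" "H2_norm (?D f) \<le> W * H2_norm f" if "in_H2 f" for f
    using comp_diff_dilation_bounded[of b n W, OF _ _ that] b peak(2) by (auto simp: W_def)
  have unit_ball_bound: "H2_norm (?D f) \<le> W" if "in_H2 f" "H2_norm f \<le> 1" for f
    using D_bounded[OF that(1)] that(2) mult_left_mono[of "H2_norm f" 1 W] by (simp add: W_def)
  have "H2_norm (?D (\<lambda>z. z ^ N)) = cmod (of_real (fact N / fact (N - n)) * b ^ (N - n))"
    unfolding comp_diff_dilation_power[OF peak(1)] by (rule H2_monomial(2))
  then have extremal: "H2_norm (?D (\<lambda>z. z ^ N)) = W"
    by (simp only: norm_mult norm_power norm_of_real) (simp add: W_def)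
  have "in_H2 (\<lambda>z. z ^ N)" "H2_norm (\<lambda>z. z ^ N) \<le> 1"
    using H2_monomial[of 1 N] by simp_all
  note opnorm = H2_opnorm_eqI[of ?D W "\<lambda>z. z ^ N", OF unit_ball_bound this extremal]
  have "fact N = fact n * fact (N - n) * real (N choose n)"
    using binomial_fact_lemma[OF peak(1)] by (metis of_nat_fact of_nat_mult mult.commute)
  then have "W = fact n * real (N choose n) * cmod b ^ (N - n)"
    by (simp add: W_def)
  then show ?thesis
    using D_bounded opnorm by simp
qed

end
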